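(* Let $f:\mathbb{R}^n\to(-\infty,+\infty]$ be proper, lower semicontinuous and prox-bounded with threshold $\lambda_f>0$, let $0<\lambda<\lambda_f$, and let $x\in\operatorname{dom}\partial_p^\lambda f$. Then the following are equivalent: (a) $\partial_p^\lambda f(x)$ is a singleton; (b) $\operatorname{conv}(f+\lambda^{-1}j)$ is differentiable at $x$ and $\operatorname{conv}(f+\lambda^{-1}j)(x)=(f+\lambda^{-1}j)(x)$; (c) $h_\lambda f$ is differentiable at $x$ and $h_\lambda f(x)=f(x)$.
   Context: $j:=\frac12\|\cdot\|^2$. $e_\lambda f(x):=\inf_y\{f(y)+\frac1{2\lambda}\|y-x\|^2\}$; prox-bounded with threshold $\lambda_f=\sup\{\lambda>0:e_\lambda f(x)>-\infty\text{ for some }x\}$. $v\in\partial_p^\lambda f(x)$ iff $x\in\operatorname{dom}f$ and $f(y)\ge f(x)+\langle v,y-x\rangle-\frac1{2\lambda}\|y-x\|^2$ for all $y$. $h_\lambda f:=-e_\lambda(-e_\lambda f)$ is the $\lambda$-proximal hull. $\operatorname{conv}g$ is the convex hull of the function $g$. *)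

theory Defs
  imports "HOL-Analysis.Analysis"
begin

text \<open>Extended-real-valued functions f : R^n -> [-inf,+inf], with R^n an arbitrary
  Euclidean space 'a.\<close>

definition proper_fun :: "('a \<Rightarrow> ereal) \<Rightarrow> bool" where
  "proper_fun f \<longleftrightarrow> (\<forall>x. f x \<noteq> -\<infinity>) \<and> (\<exists>x. f x \<noteq> \<infinity>)"

definition lsc_fun :: "('a::topological_space \<Rightarrow> ereal) \<Rightarrow> bool" where
  "lsc_fun f \<longleftrightarrow> (\<forall>x. f x \<le> Liminf (at x) f)"

definition fdom :: "('a \<Rightarrow> ereal) \<Rightarrow> 'a set" where
  "fdom f = {x. f x < \<infinity>}"

definition moreau_env :: "real \<Rightarrow> ('a::real_normed_vector \<Rightarrow> ereal) \<Rightarrow> 'a \<Rightarrow> ereal" where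
  "moreau_env lam f x = (INF y. f y + ereal ((norm (y - x))\<^sup>2 / (2 * lam)))"

text \<open>Prox-boundedness threshold lambda_f (sup of the empty set is taken as 0 here,
  i.e. lambda_f > 0 encodes prox-boundedness).\<close>
definition prox_threshold :: "('a::real_normed_vector \<Rightarrow> ereal) \<Rightarrow> ereal" where
  "prox_threshold f = Sup {ereal lam | lam. lam > 0 \<and> (\<exists>x. moreau_env lam f x > -\<infinity>)}"

definition prox_hull :: "real \<Rightarrow> ('a::real_normed_vector \<Rightarrow> ereal) \<Rightarrow> 'a \<Rightarrow> ereal" where
  "prox_hull lam f = (\<lambda>x. - moreau_env lam (\<lambda>y. - moreau_env lam f y) x)"

definition prox_subdiff :: "real \<Rightarrow> ('a::real_inner \<Rightarrow> ereal) \<Rightarrow> 'a \<Rightarrow> 'a set" where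
  "prox_subdiff lam f x = {v. x \<in> fdom f \<and>
     (\<forall>y. f y \<ge> f x + ereal (inner v (y - x) - (norm (y - x))\<^sup>2 / (2 * lam)))}"

definition ereal_convex :: "('a::real_vector \<Rightarrow> ereal) \<Rightarrow> bool" where
  "ereal_convex g \<longleftrightarrow> convex {(x, t::real). g x \<le> ereal t}"

definition conv_fun :: "('a::real_vector \<Rightarrow> ereal) \<Rightarrow> 'a \<Rightarrow> ereal" where
  "conv_fun g x = Sup {h x | h. ereal_convex h \<and> (\<forall>y. h y \<le> g y)}"

definition ereal_differentiable_at :: "('a::real_normed_vector \<Rightarrow> ereal) \<Rightarrow> 'a \<Rightarrow> bool" where
  "ereal_differentiable_at g x \<longleftrightarrow>
     (\<exists>e>0. \<forall>y\<in>ball x e. \<bar>g y\<bar> \<noteq> \<infinity>) \<and> (\<lambda>y. real_of_ereal (g y)) differentiable (at x)"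

end

theory Submission
  imports Defs
begin

text \<open>
  Put g = f + j/lam. A vector v is a lam-proximal subgradient of f at x exactly when
  v + x/lam is a subgradient of g at x, i.e. the slope of an affine minorant of g that is
  exact at x. Both conv g and h_lam f + j/lam are convex minorants of g lying above every
  affine minorant of g (the latter because it is a supremum of affine functions, one for each
  point of e_lam f). Hence they touch g at x and have there the same subgradients as g, and
  all three statements say that this common subdifferential is a singleton.

  It remains that a convex function which is finite at x and has a subgradient there is
  differentiable at x iff the subgradient is unique. Fermat's rule gives one direction. For
  the other, the remainder r h = psi (x + h) - psi x - inner w h is convex, nonnegative and has
  0 as its only subgradient. Separating its epigraph from the cone below a ray of slope e
  shows r (t d) <= e t for small t > 0 in every direction d, and convexity turns the estimates
  along the coordinate axes into r h <= e |h| near 0.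
\<close>

lemma inj_image_eq_singleton_iff:
  assumes "inj f"
  shows "(\<exists>w. f ` S = {w}) \<longleftrightarrow> (\<exists>v. S = {v})"
proof
  assume "\<exists>w. f ` S = {w}"
  then obtain w where w: "f ` S = {w}" ..
  then have "w \<in> f ` S" by simp
  then obtain v where "v \<in> S" and "w = f v" by (rule imageE)
  with w have "f ` S = f ` {v}" by simp
  then have "S = {v}" by (simp only: inj_image_eq_iff[OF assms])
  then show "\<exists>v. S = {v}" ..
next
  assume "\<exists>v. S = {v}"
  then obtain v where "S = {v}" ..
  then show "\<exists>w. f ` S = {w}" by simp
qed

text \<open>Only meaningful where psi x is finite: real_of_ereal maps both infinities to 0.\<close>

definition ereal_subdiff :: "('a::real_inner \<Rightarrow> ereal) \<Rightarrow> 'a \<Rightarrow> 'a set" where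
  "ereal_subdiff psi x = {w. \<forall>y. ereal (real_of_ereal (psi x) + inner w (y - x)) \<le> psi y}"

lemma mem_ereal_subdiff:
  "psi x = ereal c \<Longrightarrow> w \<in> ereal_subdiff psi x \<longleftrightarrow> (\<forall>y. ereal (c + inner w (y - x)) \<le> psi y)"
  by (simp add: ereal_subdiff_def)

lemma mem_ereal_subdiff_zero:
  "r 0 = 0 \<Longrightarrow> w \<in> ereal_subdiff r 0 \<longleftrightarrow> (\<forall>h. ereal (inner w h) \<le> r h)"
  by (simp add: ereal_subdiff_def)

lemma convex_affine_vimage:
  fixes L :: "'a::real_vector \<Rightarrow> 'b::real_vector"
  assumes L: "linear L" and S: "convex S"
  shows "convex ((\<lambda>z. L z + a) -` S)"
proof (rule convexI)
  fix z1 z2 and u v :: real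
  assume z: "z1 \<in> (\<lambda>z. L z + a) -` S" "z2 \<in> (\<lambda>z. L z + a) -` S"
    and uv: "0 \<le> u" "0 \<le> v" "u + v = 1"
  have "L (u *\<^sub>R z1 + v *\<^sub>R z2) + a = u *\<^sub>R (L z1 + a) + v *\<^sub>R (L z2 + a)"
    using uv(3) by (simp add: linear_add[OF L] linear_scale[OF L] scaleR_add_right
        flip: scaleR_add_left)
  then show "u *\<^sub>R z1 + v *\<^sub>R z2 \<in> (\<lambda>z. L z + a) -` S"
    using convexD[OF S _ _ uv] z by simp
qed

lemma ereal_convex_SUP:
  assumes "\<And>i. i \<in> I \<Longrightarrow> ereal_convex (F i)"
  shows "ereal_convex (\<lambda>y. SUP i\<in>I. F i y)"
proof -
  have "{(y, t). (SUP i\<in>I. F i y) \<le> ereal t} = (\<Inter>i\<in>I. {(y, t). F i y \<le> ereal t})"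
    by (auto simp: SUP_le_iff)
  then show ?thesis
    using assms unfolding ereal_convex_def by (auto intro: convex_INT)
qed

lemma ereal_convex_add_affine: "ereal_convex (\<lambda>y. a + ereal (inner b y + c))"
proof (cases a)
  case (real \<alpha>)
  have "{(y, t). a + ereal (inner b y + c) \<le> ereal t} = {z. inner (-b, 1) z \<ge> \<alpha> + c}"
    using real by (auto simp: algebra_simps)
  then show ?thesis
    unfolding ereal_convex_def using convex_halfspace_ge by metis
qed (simp_all add: ereal_convex_def)

lemma ereal_convex_translate_minus_affine:
  assumes "ereal_convex psi"
  shows "ereal_convex (\<lambda>h. psi (x + h) - ereal (c + inner w h))"
proof -
  define L where "L = (\<lambda>(h, t). (h, t + inner w h))"
  have lin: "linear L"
    unfolding L_def by (rule linearI) (auto simp: algebra_simps)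
  have epi: "{(h, t). psi (x + h) - ereal (c + inner w h) \<le> ereal t}
      = (\<lambda>z. L z + (x, c)) -` {(y, t). psi y \<le> ereal t}"
  proof (rule set_eqI, clarify)
    fix h t
    have "psi (x + h) - ereal (c + inner w h) \<le> ereal t \<longleftrightarrow> psi (h + x) \<le> ereal (t + inner w h + c)"
      by (simp add: ereal_minus_le add.commute add.left_commute)
    then show "(h, t) \<in> {(h, t). psi (x + h) - ereal (c + inner w h) \<le> ereal t}
        \<longleftrightarrow> (h, t) \<in> (\<lambda>z. L z + (x, c)) -` {(y, t). psi y \<le> ereal t}"
      by (simp add: L_def)
  qed
  show ?thesis
    unfolding ereal_convex_def epi
    by (rule convex_affine_vimage[OF lin assms[unfolded ereal_convex_def]])
qed

lemma ereal_convex_scale_le: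
  assumes cvx: "ereal_convex r" and r0: "r 0 = 0" and z: "r z \<le> ereal m"
    and "0 \<le> \<theta>" "\<theta> \<le> 1"
  shows "r (\<theta> *\<^sub>R z) \<le> ereal (\<theta> * m)"
proof -
  have "\<theta> *\<^sub>R (z, m) + (1 - \<theta>) *\<^sub>R (0, 0) \<in> {(h, t). r h \<le> ereal t}"
    using assms unfolding ereal_convex_def by (intro convexD) auto
  then show ?thesis by simp
qed

lemma convex_below_ray_cone: "convex {(s *\<^sub>R d, t) | s t. 0 < s \<and> t \<le> e * s}"
proof -
  have "{(s, t). 0 < s \<and> t \<le> e * s} = {z. inner (1, 0) z > 0} \<inter> {z. inner (-e, 1) z \<le> (0::real)}"
    by auto
  then have "convex {(s, t). 0 < s \<and> t \<le> e * s}"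
    by (simp add: convex_Int convex_halfspace_gt convex_halfspace_le)
  moreover have "linear (\<lambda>(s::real, t::real). (s *\<^sub>R d, t))"
    by (rule linearI) (auto simp: scaleR_add_left)
  ultimately have "convex ((\<lambda>(s, t). (s *\<^sub>R d, t)) ` {(s, t). 0 < s \<and> t \<le> e * s})"
    by (rule convex_linear_image[rotated])
  moreover have "(\<lambda>(s, t). (s *\<^sub>R d, t)) ` {(s, t). 0 < s \<and> t \<le> e * s}
      = {(s *\<^sub>R d, t) | s t. 0 < s \<and> t \<le> e * s}"
    by force
  ultimately show ?thesis by simp
qed

lemma ereal_subdiff_zero_nonneg:
  "r 0 = 0 \<Longrightarrow> 0 \<in> ereal_subdiff r 0 \<Longrightarrow> 0 \<le> r h"
  by (simp add: mem_ereal_subdiff_zero zero_ereal_def)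

lemma epigraph_normal_eq_zero:
  fixes r :: "'a::real_inner \<Rightarrow> ereal"
  assumes r0: "r 0 = 0" and sub: "ereal_subdiff r 0 = {0}" and "0 \<le> \<beta>"
    and normal: "\<And>h t. r h \<le> ereal t \<Longrightarrow> 0 \<le> inner a h + \<beta> * t"
  shows "a = 0"
proof -
  define w where "w = (if \<beta> = 0 then - a else - (1 / \<beta>) *\<^sub>R a)"
  have "ereal (inner w h) \<le> r h" for h
  proof (cases "r h")
    case (real \<rho>)
    have "0 \<le> \<rho>" using ereal_subdiff_zero_nonneg[of r h, OF r0] sub real by simp
    moreover have "0 \<le> inner a h + \<beta> * \<rho>" using normal real by simp
    ultimately have "inner w h \<le> \<rho>"
      using \<open>0 \<le> \<beta>\<close> by (auto simp: w_def field_simps)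
    then show ?thesis using real by simp
  qed (use ereal_subdiff_zero_nonneg[of r h, OF r0] sub in auto)
  then have "w = 0" using sub mem_ereal_subdiff_zero[of r, OF r0] by blast
  then show "a = 0" by (auto simp: w_def split: if_splits)
qed

lemma ray_cone_epigraph_separator_eq_zero:
  fixes r :: "'a::real_inner \<Rightarrow> ereal"
  assumes r0: "r 0 = 0" and sub: "ereal_subdiff r 0 = {0}" and e: "0 < e"
    and cone: "\<And>s. 0 < s \<Longrightarrow> s * (inner a d + \<beta> * e) \<le> b"
    and epi: "\<And>h t. r h \<le> ereal t \<Longrightarrow> b \<le> inner a h + \<beta> * t"
  shows "(a, \<beta>) = 0"
proof -
  define c where "c = inner a d + \<beta> * e"
  have "b \<le> 0" using epi[of 0 0] r0 by simp
  have "0 \<le> \<beta>"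
  proof (rule ccontr)
    assume "\<not> 0 \<le> \<beta>"
    then have "b \<le> \<beta> * ((b - 1) / \<beta>)"
      using epi[of 0 "(b - 1) / \<beta>"] r0 \<open>b \<le> 0\<close> by (simp add: divide_nonpos_neg)
    then show False using \<open>\<not> 0 \<le> \<beta>\<close> by simp
  qed
  have "b = 0"
  proof (rule ccontr)
    assume "b \<noteq> 0"
    then have "b < 0" "c < 0"
      using \<open>b \<le> 0\<close> cone[of 1] by (auto simp: c_def)
    then have "b / (2 * c) * c \<le> b"
      using cone[of "b / (2 * c)"] by (simp add: c_def divide_neg_neg)
    then have "b / 2 \<le> b" using \<open>c < 0\<close> by simp
    then show False using \<open>b < 0\<close> by simp
  qed
  then have "a = 0"
    using epigraph_normal_eq_zero[OF r0 sub \<open>0 \<le> \<beta>\<close>] epi by blast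
  moreover have "\<beta> = 0"
    using cone[of 1] \<open>a = 0\<close> \<open>b = 0\<close> \<open>0 \<le> \<beta>\<close> e by (simp add: mult_le_0_iff)
  ultimately show ?thesis by (simp add: zero_prod_def)
qed

text \<open>If the ray of slope e in direction d stayed strictly below the graph of r, a hyperplane
  separating the cone below that ray from the epigraph of r would be nontrivial.\<close>

lemma ex_ray_below_slope:
  fixes r :: "'a::euclidean_space \<Rightarrow> ereal"
  assumes cvx: "ereal_convex r" and r0: "r 0 = 0" and sub: "ereal_subdiff r 0 = {0}"
    and e: "0 < e"
  shows "\<exists>s>0. r (s *\<^sub>R d) \<le> ereal (e * s)"
proof (rule ccontr)
  assume "\<not> ?thesis"
  then have above: "ereal (e * s) < r (s *\<^sub>R d)" if "0 < s" for s
    using that by (auto simp: not_le)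
  define K where "K = {(s *\<^sub>R d, t) | s t. 0 < s \<and> t \<le> e * s}"
  define E where "E = {(h, t). r h \<le> ereal t}"
  have "K \<inter> E = {}"
  proof (rule equals0I)
    fix z assume "z \<in> K \<inter> E"
    then obtain s t where "0 < s" "t \<le> e * s" "r (s *\<^sub>R d) \<le> ereal t"
      unfolding K_def E_def by auto
    then show False using above[of s] by (meson ereal_less_eq(3) not_le order.trans)
  qed
  moreover have "(d, e) \<in> K"
    using e unfolding K_def by (auto intro!: exI[of _ 1])
  moreover have "(0, 0) \<in> E"
    using r0 unfolding E_def by simp
  ultimately obtain n b where "n \<noteq> 0" and K_le: "\<forall>z\<in>K. inner n z \<le> b"
    and E_ge: "\<forall>z\<in>E. b \<le> inner n z"
    using separating_hyperplane_sets[OF convex_below_ray_cone[of d e, folded K_def]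
        cvx[unfolded ereal_convex_def, folded E_def]] by blast
  obtain a \<beta> where n: "n = (a, \<beta>)" by (cases n)
  have "s * (inner a d + \<beta> * e) \<le> b" if "0 < s" for s
  proof -
    have "(s *\<^sub>R d, e * s) \<in> K" unfolding K_def using that by auto
    then show ?thesis using K_le n by (auto simp: algebra_simps)
  qed
  moreover have "b \<le> inner a h + \<beta> * t" if "r h \<le> ereal t" for h t
    using E_ge that n unfolding E_def by auto
  ultimately have "(a, \<beta>) = 0"
    by (rule ray_cone_epigraph_separator_eq_zero[OF r0 sub e])
  then show False using \<open>n \<noteq> 0\<close> n by simp
qed

lemma finite_rays_below_slope:
  fixes r :: "'a::euclidean_space \<Rightarrow> ereal"
  assumes cvx: "ereal_convex r" and r0: "r 0 = 0" and sub: "ereal_subdiff r 0 = {0}"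
    and e: "0 < e" and "finite D"
  shows "\<exists>s>0. \<forall>d\<in>D. \<forall>t\<in>{0..s}. r (t *\<^sub>R d) \<le> ereal (e * t)"
  using \<open>finite D\<close>
proof induction
  case empty
  show ?case using zero_less_one by blast
next
  case (insert d D)
  obtain s1 where s1: "0 < s1" "\<forall>d\<in>D. \<forall>t\<in>{0..s1}. r (t *\<^sub>R d) \<le> ereal (e * t)"
    using insert.IH by blast
  obtain s2 where s2: "0 < s2" "r (s2 *\<^sub>R d) \<le> ereal (e * s2)"
    using ex_ray_below_slope[OF cvx r0 sub e] by blast
  have "r (t *\<^sub>R d) \<le> ereal (e * t)" if "t \<in> {0..s2}" for t
    using ereal_convex_scale_le[OF cvx r0 s2(2), of "t / s2"] that s2(1)
    by (simp add: mult.commute)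
  then show ?case
    using s1 s2(1) by (intro exI[of _ "min s1 s2"]) auto
qed

lemma axes_below_slope:
  fixes r :: "'a::euclidean_space \<Rightarrow> ereal"
  assumes cvx: "ereal_convex r" and r0: "r 0 = 0" and sub: "ereal_subdiff r 0 = {0}"
    and e: "0 < e"
  shows "\<exists>s>0. \<forall>i\<in>Basis. \<forall>t. \<bar>t\<bar> \<le> s \<longrightarrow> r (t *\<^sub>R i) \<le> ereal (e * \<bar>t\<bar>)"
proof -
  obtain s where "0 < s"
    and rays: "\<forall>d\<in>Basis \<union> uminus ` Basis. \<forall>t\<in>{0..s}. r (t *\<^sub>R d) \<le> ereal (e * t)"
    using finite_rays_below_slope[OF cvx r0 sub e, of "Basis \<union> uminus ` Basis"] by auto
  have "r (t *\<^sub>R i) \<le> ereal (e * \<bar>t\<bar>)" if "i \<in> Basis" "\<bar>t\<bar> \<le> s" for i t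
  proof (cases "0 \<le> t")
    case False
    then show ?thesis using rays[rule_format, of "- i" "- t"] that by (simp add: image_iff)
  qed (use rays that in auto)
  then show ?thesis using \<open>0 < s\<close> by blast
qed

lemma sum_abs_inner_Basis_le: "(\<Sum>i\<in>Basis. \<bar>inner h i\<bar>) \<le> DIM('a) * norm (h::'a::euclidean_space)"
  using sum_bounded_above[of Basis "\<lambda>i. \<bar>inner h i\<bar>" "norm h"] Basis_le_norm by auto

lemma ereal_convex_le_eps_norm:
  fixes r :: "'a::euclidean_space \<Rightarrow> ereal"
  assumes cvx: "ereal_convex r" and r0: "r 0 = 0" and sub: "ereal_subdiff r 0 = {0}"
    and e: "0 < e"
  shows "\<exists>\<delta>>0. \<forall>h. norm h < \<delta> \<longrightarrow> r h \<le> ereal (e * norm h)"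
proof -
  define n where "n = real DIM('a)"
  have n: "0 < n" unfolding n_def by simp
  obtain s where s: "0 < s"
    and axes: "\<forall>i\<in>Basis. \<forall>t. \<bar>t\<bar> \<le> s \<longrightarrow> r (t *\<^sub>R i) \<le> ereal (e / n * \<bar>t\<bar>)"
    using axes_below_slope[OF cvx r0 sub, of "e / n"] e n by auto
  show ?thesis
  proof (intro exI[of _ "s / n"] conjI allI impI)
    show "0 < s / n" using s n by simp
    fix h :: 'a assume h: "norm h < s / n"
    define E where "E = {(h, t). r h \<le> ereal t}"
    \<comment> \<open>h is the average of the n points y i, which lie in E by the axis estimates\<close>
    define y where "y i = ((n * inner h i) *\<^sub>R i, e / n * \<bar>n * inner h i\<bar>)" for i
    have "y i \<in> E" if i: "i \<in> Basis" for i
    proof -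
      have "\<bar>n * inner h i\<bar> \<le> n * norm h"
        using Basis_le_norm[OF i, of h] n by (simp add: abs_mult)
      also have "\<dots> \<le> s" using h n by (simp add: field_simps)
      finally show ?thesis using axes i unfolding y_def E_def by auto
    qed
    then have "(\<Sum>i\<in>Basis. (1 / n) *\<^sub>R y i) \<in> E"
      using cvx n unfolding ereal_convex_def E_def by (intro convex_sum) (auto simp: n_def)
    moreover have "(\<Sum>i\<in>Basis. (1 / n) *\<^sub>R y i) = (h, e / n * (\<Sum>i\<in>Basis. \<bar>inner h i\<bar>))"
      using n by (simp add: y_def prod_eq_iff fst_sum snd_sum sum_distrib_left abs_mult
          euclidean_representation)
    ultimately have "r h \<le> ereal (e / n * (\<Sum>i\<in>Basis. \<bar>inner h i\<bar>))"
      unfolding E_def by simp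
    also have "\<dots> \<le> ereal (e / n * (n * norm h))"
      unfolding ereal_less_eq(3) using sum_abs_inner_Basis_le[of h] e n
      by (intro mult_left_mono) (auto simp: n_def)
    finally show "r h \<le> ereal (e * norm h)" using n by simp
  qed
qed

lemma has_derivative_real_of_ereal_squeeze:
  fixes psi :: "'a::real_inner \<Rightarrow> ereal"
  assumes px: "psi x = ereal c"
    and lower: "\<And>h. ereal (c + inner w h) \<le> psi (x + h)"
    and upper: "\<And>e. 0 < e \<Longrightarrow>
      \<exists>\<delta>>0. \<forall>h. norm h < \<delta> \<longrightarrow> psi (x + h) \<le> ereal (c + inner w h + e * norm h)"
  shows "((\<lambda>y. real_of_ereal (psi y)) has_derivative inner w) (at x)"
  unfolding has_derivative_at_alt
proof (intro conjI allI impI)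
  show "bounded_linear (inner w)" by (rule bounded_linear_inner_right)
  fix e :: real assume "0 < e"
  then obtain \<delta> where "0 < \<delta>"
    and \<delta>: "\<forall>h. norm h < \<delta> \<longrightarrow> psi (x + h) \<le> ereal (c + inner w h + e * norm h)"
    using upper by blast
  have "\<bar>real_of_ereal (psi y) - real_of_ereal (psi x) - inner w (y - x)\<bar> \<le> e * norm (y - x)"
    if "norm (y - x) < \<delta>" for y
  proof -
    have "psi (x + (y - x)) \<le> ereal (c + inner w (y - x) + e * norm (y - x))"
      using \<delta> that by blast
    then show ?thesis
      using lower[of "y - x"] px by (cases "psi y") auto
  qed
  then show "\<exists>d>0. \<forall>y. norm (y - x) < d \<longrightarrow>
      norm (real_of_ereal (psi y) - real_of_ereal (psi x) - inner w (y - x)) \<le> e * norm (y - x)"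
    using \<open>0 < \<delta>\<close> by auto
qed

lemma ereal_differentiable_at_squeeze:
  fixes psi :: "'a::real_inner \<Rightarrow> ereal"
  assumes px: "psi x = ereal c"
    and lower: "\<And>h. ereal (c + inner w h) \<le> psi (x + h)"
    and upper: "\<And>e. 0 < e \<Longrightarrow>
      \<exists>\<delta>>0. \<forall>h. norm h < \<delta> \<longrightarrow> psi (x + h) \<le> ereal (c + inner w h + e * norm h)"
  shows "ereal_differentiable_at psi x"
  unfolding ereal_differentiable_at_def
proof (rule conjI)
  obtain \<delta> where "0 < \<delta>"
    and \<delta>: "\<forall>h. norm h < \<delta> \<longrightarrow> psi (x + h) \<le> ereal (c + inner w h + 1 * norm h)"
    using upper[of 1] by auto
  have "\<bar>psi y\<bar> \<noteq> \<infinity>" if "y \<in> ball x \<delta>" for y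
  proof -
    have "norm (y - x) < \<delta>" using that by (simp add: dist_norm norm_minus_commute)
    then have "psi (x + (y - x)) \<le> ereal (c + inner w (y - x) + 1 * norm (y - x))"
      using \<delta> by blast
    then show ?thesis using lower[of "y - x"] by (cases "psi y") auto
  qed
  then show "\<exists>e>0. \<forall>y\<in>ball x e. \<bar>psi y\<bar> \<noteq> \<infinity>"
    using \<open>0 < \<delta>\<close> by (intro exI[of _ \<delta>]) auto
  show "(\<lambda>y. real_of_ereal (psi y)) differentiable (at x)"
    using has_derivative_real_of_ereal_squeeze[of psi x c w, OF px lower upper] by (rule differentiableI)
qed

lemma ereal_differentiable_at_if_subdiff_singleton:
  fixes psi :: "'a::euclidean_space \<Rightarrow> ereal"
  assumes cvx: "ereal_convex psi" and px: "psi x = ereal c"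
    and sub: "ereal_subdiff psi x = {w}"
  shows "ereal_differentiable_at psi x"
proof -
  define r where "r h = psi (x + h) - ereal (c + inner w h)" for h
  have shift: "(\<forall>h. ereal (c + inner v h) \<le> psi (x + h)) \<longleftrightarrow> v \<in> ereal_subdiff psi x" for v
    unfolding mem_ereal_subdiff[of psi, OF px]
  proof
    assume "\<forall>h. ereal (c + inner v h) \<le> psi (x + h)"
    then show "\<forall>y. ereal (c + inner v (y - x)) \<le> psi y" by (metis add.commute diff_add_cancel)
  qed (metis add_diff_cancel_left')
  have r0: "r 0 = 0" using px by (simp add: r_def)
  have "u \<in> ereal_subdiff r 0 \<longleftrightarrow> w + u \<in> ereal_subdiff psi x" for u
    unfolding mem_ereal_subdiff_zero[of r, OF r0] shift[symmetric] r_def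
    by (simp add: ereal_le_minus inner_add_left ac_simps)
  then have "ereal_subdiff r 0 = {0}" using sub by auto
  moreover have "ereal_convex r"
    unfolding r_def by (rule ereal_convex_translate_minus_affine[OF cvx])
  ultimately have "\<exists>\<delta>>0. \<forall>h. norm h < \<delta> \<longrightarrow> r h \<le> ereal (e * norm h)" if "0 < e" for e
    using ereal_convex_le_eps_norm[of r, OF _ r0 _ that] by blast
  then have "\<exists>\<delta>>0. \<forall>h. norm h < \<delta> \<longrightarrow> psi (x + h) \<le> ereal (c + inner w h + e * norm h)"
    if "0 < e" for e
    using that unfolding r_def by (simp add: ereal_minus_le add.commute)
  moreover have "ereal (c + inner w h) \<le> psi (x + h)" for h
    using sub shift by blast
  ultimately show ?thesis using ereal_differentiable_at_squeeze[of psi x c w, OF px] by blast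
qed

lemma has_derivative_eq_inner_if_subgradient:
  fixes psi :: "'a::real_inner \<Rightarrow> ereal"
  assumes D: "((\<lambda>y. real_of_ereal (psi y)) has_derivative D) (at x)"
    and "0 < e" and fin: "\<forall>y\<in>ball x e. \<bar>psi y\<bar> \<noteq> \<infinity>"
    and w: "w \<in> ereal_subdiff psi x"
  shows "D = inner w"
proof -
  define G where "G y = real_of_ereal (psi y) - inner w (y - x)" for y
  have "(G has_derivative (\<lambda>h. D h - inner w h)) (at x)"
    unfolding G_def inner_diff_right
    by (intro has_derivative_diff[OF D]) (auto intro!: derivative_eq_intros)
  moreover have "\<forall>\<^sub>F y in at x. G x \<le> G y"
    unfolding eventually_at
  proof (intro exI[of _ e] conjI ballI impI allI)
    fix y assume "y \<noteq> x \<and> dist y x < e"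
    then have "\<bar>psi y\<bar> \<noteq> \<infinity>" using fin by (simp add: dist_commute)
    moreover have "ereal (real_of_ereal (psi x) + inner w (y - x)) \<le> psi y"
      using w unfolding ereal_subdiff_def by blast
    ultimately show "G x \<le> G y" unfolding G_def by (cases "psi y") auto
  qed (rule \<open>0 < e\<close>)
  ultimately have "(\<lambda>h. D h - inner w h) = (\<lambda>h. 0)"
    by (rule has_derivative_local_min)
  then show ?thesis by (simp add: fun_eq_iff)
qed

lemma ereal_subdiff_subsingleton_if_differentiable:
  fixes psi :: "'a::real_inner \<Rightarrow> ereal"
  assumes "ereal_differentiable_at psi x"
    and v: "v \<in> ereal_subdiff psi x" and w: "w \<in> ereal_subdiff psi x"
  shows "v = w"
proof -
  obtain e D where e: "0 < e" and fin: "\<forall>y\<in>ball x e. \<bar>psi y\<bar> \<noteq> \<infinity>"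
    and D: "((\<lambda>y. real_of_ereal (psi y)) has_derivative D) (at x)"
    using assms(1) unfolding ereal_differentiable_at_def differentiable_def by blast
  have "inner v = inner w"
    using has_derivative_eq_inner_if_subgradient[OF D e fin v]
      has_derivative_eq_inner_if_subgradient[OF D e fin w] by simp
  then have "inner (v - w) (v - w) = 0" by (simp add: inner_diff_left)
  then show ?thesis by simp
qed

lemma ereal_differentiable_at_add:
  assumes "ereal_differentiable_at phi x" and "p differentiable (at x)"
  shows "ereal_differentiable_at (\<lambda>y. phi y + ereal (p y)) x"
proof -
  obtain e where "0 < e" and fin: "\<forall>y\<in>ball x e. \<bar>phi y\<bar> \<noteq> \<infinity>"
    and diff: "(\<lambda>y. real_of_ereal (phi y)) differentiable (at x)"
    using assms(1) unfolding ereal_differentiable_at_def by blast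
  from diff have "(\<lambda>y. real_of_ereal (phi y) + p y) differentiable (at x)"
    using assms(2) by (rule differentiable_add)
  then have "(\<lambda>y. real_of_ereal (phi y + ereal (p y))) differentiable (at x)"
  proof (rule differentiable_transform_within[OF _ \<open>0 < e\<close> UNIV_I])
    fix y assume "dist y x < e"
    then have "\<bar>phi y\<bar> \<noteq> \<infinity>" using fin by (simp add: dist_commute)
    then show "real_of_ereal (phi y) + p y = real_of_ereal (phi y + ereal (p y))"
      by (cases "phi y") auto
  qed
  then show ?thesis
    unfolding ereal_differentiable_at_def using \<open>0 < e\<close> fin by force
qed

lemma ereal_differentiable_at_add_iff:
  assumes "p differentiable (at x)"
  shows "ereal_differentiable_at (\<lambda>y. phi y + ereal (p y)) x \<longleftrightarrow> ereal_differentiable_at phi x"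
proof
  assume "ereal_differentiable_at (\<lambda>y. phi y + ereal (p y)) x"
  moreover have "(\<lambda>y. - p y) differentiable (at x)"
    using assms by (rule differentiable_minus)
  ultimately have "ereal_differentiable_at (\<lambda>y. phi y + ereal (p y) + ereal (- p y)) x"
    by (rule ereal_differentiable_at_add)
  moreover have "phi y + ereal (p y) + ereal (- p y) = phi y" for y
    by (cases "phi y") simp_all
  ultimately show "ereal_differentiable_at phi x" by simp
qed (rule ereal_differentiable_at_add[OF _ assms])

lemma ereal_subdiff_singleton_iff_differentiable:
  fixes g psi :: "'a::euclidean_space \<Rightarrow> ereal"
  assumes cvx: "ereal_convex psi" and le: "\<And>y. psi y \<le> g y"
    and affine_le: "\<And>a w y. (\<And>u. ereal (a + inner w u) \<le> g u) \<Longrightarrow> ereal (a + inner w y) \<le> psi y"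
    and gx: "g x = ereal c" and ne: "ereal_subdiff g x \<noteq> {}"
  shows "psi x = g x"
    and "(\<exists>w. ereal_subdiff g x = {w}) \<longleftrightarrow> ereal_differentiable_at psi x"
proof -
  have minorant_le: "ereal (c + inner w (y - x)) \<le> psi y" if "w \<in> ereal_subdiff g x" for w y
  proof -
    have "ereal (c - inner w x + inner w u) \<le> g u" for u
      using that mem_ereal_subdiff[of g, OF gx] by (simp add: algebra_simps)
    then show ?thesis
      using affine_le[of "c - inner w x" w y] by (simp add: algebra_simps)
  qed
  show psi_x: "psi x = g x"
    using ne minorant_le[of _ x] le[of x] gx by (auto intro: antisym)
  then have sub: "ereal_subdiff psi x = ereal_subdiff g x"
    using le minorant_le unfolding mem_ereal_subdiff[of psi, OF psi_x[unfolded gx]]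
      set_eq_iff mem_ereal_subdiff[of g, OF gx] by (meson order.trans)
  show "(\<exists>w. ereal_subdiff g x = {w}) \<longleftrightarrow> ereal_differentiable_at psi x"
  proof
    assume "\<exists>w. ereal_subdiff g x = {w}"
    then show "ereal_differentiable_at psi x"
      using ereal_differentiable_at_if_subdiff_singleton[OF cvx] psi_x gx sub by metis
  next
    assume "ereal_differentiable_at psi x"
    then show "\<exists>w. ereal_subdiff g x = {w}"
      using ereal_subdiff_subsingleton_if_differentiable ne sub by blast
  qed
qed

lemma conv_fun_le: "conv_fun g y \<le> g y"
  unfolding conv_fun_def by (rule Sup_least) auto

lemma ereal_convex_conv_fun: "ereal_convex (conv_fun g)"
proof -
  have "conv_fun g = (\<lambda>y. SUP h\<in>{h. ereal_convex h \<and> (\<forall>y. h y \<le> g y)}. h y)"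
    by (rule ext) (simp add: conv_fun_def image_Collect)
  then show ?thesis by (auto intro: ereal_convex_SUP)
qed

lemma affine_le_conv_fun:
  assumes "\<And>u. ereal (a + inner w u) \<le> g u"
  shows "ereal (a + inner w y) \<le> conv_fun g y"
proof -
  have "ereal_convex (\<lambda>y. ereal (a + inner w y))"
    using ereal_convex_add_affine[of 0 w a] by (simp add: add.commute)
  then have "ereal (a + inner w y) \<in> {h y | h. ereal_convex h \<and> (\<forall>y. h y \<le> g y)}"
    using assms by (auto intro!: exI[of _ "\<lambda>y. ereal (a + inner w y)"])
  then show ?thesis
    unfolding conv_fun_def by (rule Sup_upper)
qed

lemma prox_hull_le: "prox_hull lam f y \<le> f y"
proof -
  have "- f y \<le> - moreau_env lam f u + ereal ((norm (u - y))\<^sup>2 / (2 * lam))" for u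
  proof -
    have "moreau_env lam f u \<le> f y + ereal ((norm (y - u))\<^sup>2 / (2 * lam))"
      unfolding moreau_env_def by (rule INF_lower) simp
    then show ?thesis
      by (cases "moreau_env lam f u"; cases "f y") (auto simp: norm_minus_commute)
  qed
  then have "- f y \<le> moreau_env lam (\<lambda>y. - moreau_env lam f y) y"
    unfolding moreau_env_def by (rule INF_greatest)
  then show ?thesis
    unfolding prox_hull_def by (simp add: ereal_uminus_le_reorder)
qed

lemma prox_hull_add_sq_eq_SUP:
  "prox_hull lam f y + ereal ((norm y)\<^sup>2 / (2 * lam))
    = (SUP u. moreau_env lam f u + ereal (inner u y / lam - (norm u)\<^sup>2 / (2 * lam)))"
proof -
  have quad: "(norm y)\<^sup>2 / (2 * lam) - (norm (u - y))\<^sup>2 / (2 * lam)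
      = inner u y / lam - (norm u)\<^sup>2 / (2 * lam)" for u
  proof -
    have "(norm (u - y))\<^sup>2 = (norm u)\<^sup>2 - 2 * inner u y + (norm y)\<^sup>2"
      by (simp add: power2_norm_eq_inner inner_diff_left inner_diff_right inner_commute[of y u])
    then show ?thesis by (simp add: diff_divide_distrib add_divide_distrib)
  qed
  have "prox_hull lam f y = (SUP u. - (- moreau_env lam f u + ereal ((norm (u - y))\<^sup>2 / (2 * lam))))"
    unfolding prox_hull_def moreau_env_def[of lam "\<lambda>y. - moreau_env lam f y"]
    by (simp add: ereal_SUP_uminus_eq)
  then have "prox_hull lam f y + ereal ((norm y)\<^sup>2 / (2 * lam))
      = (SUP u. - (- moreau_env lam f u + ereal ((norm (u - y))\<^sup>2 / (2 * lam)))
                + ereal ((norm y)\<^sup>2 / (2 * lam)))"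
    by (simp add: SUP_ereal_add_left)
  also have "\<dots> = (SUP u. moreau_env lam f u + ereal (inner u y / lam - (norm u)\<^sup>2 / (2 * lam)))"
  proof (rule SUP_cong)
    fix u
    show "- (- moreau_env lam f u + ereal ((norm (u - y))\<^sup>2 / (2 * lam))) + ereal ((norm y)\<^sup>2 / (2 * lam))
        = moreau_env lam f u + ereal (inner u y / lam - (norm u)\<^sup>2 / (2 * lam))"
      using quad[of u] by (cases "moreau_env lam f u") auto
  qed simp
  finally show ?thesis .
qed

lemma ereal_convex_prox_hull_add_sq:
  fixes f :: "'a::real_inner \<Rightarrow> ereal"
  shows "ereal_convex (\<lambda>y. prox_hull lam f y + ereal ((norm y)\<^sup>2 / (2 * lam)))"
proof -
  have "inner u y / lam - (norm u)\<^sup>2 / (2 * lam) = inner (u /\<^sub>R lam) y + - ((norm u)\<^sup>2 / (2 * lam))"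
    for u y :: 'a
    by (simp add: inverse_eq_divide)
  then have "(\<lambda>y. prox_hull lam f y + ereal ((norm y)\<^sup>2 / (2 * lam)))
      = (\<lambda>y. SUP u. moreau_env lam f u + ereal (inner (u /\<^sub>R lam) y + - ((norm u)\<^sup>2 / (2 * lam))))"
    unfolding prox_hull_add_sq_eq_SUP by presburger
  then show ?thesis
    by (simp only:) (rule ereal_convex_SUP, rule ereal_convex_add_affine)
qed

lemma affine_le_prox_hull_add_sq:
  assumes lam: "0 < lam" and le: "\<And>u. ereal (a + inner w u) \<le> f u + ereal ((norm u)\<^sup>2 / (2 * lam))"
  shows "ereal (a + inner w y) \<le> prox_hull lam f y + ereal ((norm y)\<^sup>2 / (2 * lam))"
proof -
  \<comment> \<open>the minorant is recovered from the term u = z of the supremum in prox_hull_add_sq_eq_SUP\<close>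
  define z where "z = lam *\<^sub>R w"
  have "ereal (a + lam * (norm w)\<^sup>2 / 2) \<le> moreau_env lam f z"
    unfolding moreau_env_def
  proof (rule INF_greatest)
    fix u
    have "(norm (u - z))\<^sup>2 / (2 * lam) = (norm u)\<^sup>2 / (2 * lam) - inner w u + lam * (norm w)\<^sup>2 / 2"
      using lam by (simp add: z_def power2_norm_eq_inner inner_diff_left inner_diff_right
          inner_commute[of u w] field_simps)
    then show "ereal (a + lam * (norm w)\<^sup>2 / 2) \<le> f u + ereal ((norm (u - z))\<^sup>2 / (2 * lam))"
      using le[of u] by (cases "f u") auto
  qed
  then have "ereal (a + inner w y)
      \<le> moreau_env lam f z + ereal (inner z y / lam - (norm z)\<^sup>2 / (2 * lam))"
    using lam by (cases "moreau_env lam f z") (auto simp: z_def power2_eq_square field_simps)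
  also have "\<dots> \<le> prox_hull lam f y + ereal ((norm y)\<^sup>2 / (2 * lam))"
    unfolding prox_hull_add_sq_eq_SUP by (rule SUP_upper) simp
  finally show ?thesis .
qed

lemma ereal_subdiff_add_sq_eq_prox_subdiff:
  assumes lam: "0 < lam" and fx: "f x = ereal c"
  shows "ereal_subdiff (\<lambda>y. f y + ereal ((norm y)\<^sup>2 / (2 * lam))) x
    = (\<lambda>v. v + x /\<^sub>R lam) ` prox_subdiff lam f x"
proof -
  have x: "x \<in> fdom f" using fx by (simp add: fdom_def)
  have quad: "c + inner v (y - x) - (norm (y - x))\<^sup>2 / (2 * lam) + (norm y)\<^sup>2 / (2 * lam)
      = c + (norm x)\<^sup>2 / (2 * lam) + inner (v + x /\<^sub>R lam) (y - x)" for v y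
    using lam by (simp add: power2_norm_eq_inner inner_diff_left inner_diff_right inner_add_left
        inner_commute[of y x] field_simps)
  have "v \<in> prox_subdiff lam f x
      \<longleftrightarrow> v + x /\<^sub>R lam \<in> ereal_subdiff (\<lambda>y. f y + ereal ((norm y)\<^sup>2 / (2 * lam))) x" for v
  proof -
    have "ereal (c + inner v (y - x) - (norm (y - x))\<^sup>2 / (2 * lam)) \<le> f y
        \<longleftrightarrow> ereal (c + (norm x)\<^sup>2 / (2 * lam) + inner (v + x /\<^sub>R lam) (y - x))
            \<le> f y + ereal ((norm y)\<^sup>2 / (2 * lam))" for y
      unfolding quad[symmetric] by (cases "f y") auto
    then show ?thesis
      using x fx by (simp add: prox_subdiff_def mem_ereal_subdiff add_diff_eq)
  qed
  then show ?thesis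
    by (auto intro: image_eqI[of _ _ "_ - x /\<^sub>R lam"])
qed

theorem mainTheorem7:
  fixes f :: "'a::euclidean_space \<Rightarrow> ereal" and lam :: real and x :: 'a
  assumes "proper_fun f" and "lsc_fun f"
    and "prox_threshold f > 0"
    and "0 < lam" and "ereal lam < prox_threshold f"
    and "prox_subdiff lam f x \<noteq> {}"
  shows "((\<exists>v. prox_subdiff lam f x = {v}) \<longleftrightarrow>
           (ereal_differentiable_at (conv_fun (\<lambda>y. f y + ereal ((norm y)\<^sup>2 / (2 * lam)))) x \<and>
            conv_fun (\<lambda>y. f y + ereal ((norm y)\<^sup>2 / (2 * lam))) x = f x + ereal ((norm x)\<^sup>2 / (2 * lam))))
       \<and> ((\<exists>v. prox_subdiff lam f x = {v}) \<longleftrightarrow>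
           (ereal_differentiable_at (prox_hull lam f) x \<and> prox_hull lam f x = f x))"
proof -
  let ?g = "\<lambda>y. f y + ereal ((norm y)\<^sup>2 / (2 * lam))"
  let ?h = "\<lambda>y. prox_hull lam f y + ereal ((norm y)\<^sup>2 / (2 * lam))"
  obtain c where fx: "f x = ereal c"
    using assms(1,6) unfolding proper_fun_def prox_subdiff_def fdom_def by (cases "f x") auto
  have gx: "?g x = ereal (c + (norm x)\<^sup>2 / (2 * lam))" using fx by simp
  have sub_g: "ereal_subdiff ?g x = (\<lambda>v. v + x /\<^sub>R lam) ` prox_subdiff lam f x"
    by (rule ereal_subdiff_add_sq_eq_prox_subdiff[of lam f x c, OF \<open>0 < lam\<close> fx])
  then have ne: "ereal_subdiff ?g x \<noteq> {}" using assms(6) by simp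
  have singleton: "(\<exists>v. prox_subdiff lam f x = {v}) \<longleftrightarrow> (\<exists>w. ereal_subdiff ?g x = {w})"
    unfolding sub_g by (rule inj_image_eq_singleton_iff[symmetric]) (simp add: inj_def)
  note conv = ereal_subdiff_singleton_iff_differentiable[of "conv_fun ?g" ?g,
      OF ereal_convex_conv_fun conv_fun_le affine_le_conv_fun gx ne]
  note hull = ereal_subdiff_singleton_iff_differentiable[of ?h ?g,
      OF ereal_convex_prox_hull_add_sq _ affine_le_prox_hull_add_sq[OF \<open>0 < lam\<close>] gx ne]
  have h_le_g: "?h y \<le> ?g y" for y by (simp add: prox_hull_le add_right_mono)
  have "prox_hull lam f x = f x"
    using hull(1)[OF h_le_g] fx by (cases "prox_hull lam f x") auto
  moreover have "ereal_differentiable_at ?h x \<longleftrightarrow> ereal_differentiable_at (prox_hull lam f) x"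
    by (rule ereal_differentiable_at_add_iff)
      (unfold power2_norm_eq_inner divide_inverse,
       intro differentiable_mult differentiable_inner differentiable_ident differentiable_const)
  ultimately show ?thesis using singleton conv hull(2)[OF h_le_g] by simp
qed

end
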